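(* Let $s\geqslant1$, let $\bar X=X_1,\dots,X_r$ be variables and $\bar f=f_1,\dots,f_r$ elements of the corresponding domains of $\mathcal{B}_s$. (1) Let $m\geqslant1$, let $\varphi(\bar X)$ be a formula of $LP_s$ with all free variables among $\bar X$ and $sort(\varphi)\leqslant m$, and let $\alpha,\beta\in M$ satisfy $\langle\alpha\rangle_i=\langle\beta\rangle_i$ for all $i=0,\dots,m-1$. Then $\alpha\Vdash\varphi(\bar f)$ iff $\beta\Vdash\varphi(\bar f)$. (2) Let $p\geqslant1$, let $\varphi(\mathcal H^p,\bar X)$ be a formula of $LP_s$ with all free variables among $\mathcal H^p,\bar X$, with $sort(\varphi)\leqslant p$, and such that $\varphi$ has no free variables of type $p$ over non-lawlike functionals other than $\mathcal H^p$. Let $\alpha\in M$ and $g,h\in l_p$ with $g(\bar\alpha(p),n)=h(\bar\alpha(p),n)$ for all $n<lh(\alpha)$. Then $\alpha\Vdash\varphi(g,\bar f)$ iff $\alpha\Vdash\varphi(h,\bar f)$.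
   Context: $sort(\varphi)$ is the maximal type of the free variables of $\varphi$ (0 if none); number variables have type 0, and the three kinds of functional variables $F^n,A^n,\mathcal F^n$ have type $n$; "non-lawlike" variables of type $n$ are the $F^n$ and $\mathcal F^n$. Language $L_s$ ($s\geqslant1$). Variables: $x,y,z,\dots$ of type 0 (natural numbers); for $1\leqslant n\leqslant s$, variables $F^n,G^n,\dots$ (over $n$-functionals), $A^n,B^n,\dots$ (over lawlike $n$-functionals), $\mathcal{F}^n,\mathcal{G}^n,\dots$ (over lawless $n$-functionals). Constants: $0$ and $K^n$. Terms and $n$-functionals: number variables and $0$ are terms; type-$n$ variables and $K^n$ are $n$-functionals; $St$, $t+\tau$, $t\cdot\tau$ are terms for terms $t,\tau$; $N^n(Z)$ is an $n$-functional for an $n$-functional $Z$; $Z(t)=Ap^1(Z,t)$ is a term for a 1-functional $Z$; $Z(t)=Ap^{n+1}(Z,t)$ is an $n$-functional for an $(n+1)$-functional $Z$. Atomic formulas $t=_0\tau$, $Z=_nV$; formulas built with $\bot,\wedge,\vee,\supset,\forall,\exists$. $LP_s$ adds atomic formulas $\vdash_z\varphi(\bar X)$ for terms $z$ and formulas $\varphi$ of $L_s$ with free variables in $\bar X$. Beth model $\mathcal{B}_s$. A path in a poset is a maximal linearly ordered subset; a path through $x$ is a path containing $x$. $b^{(m)}$: sequences of length $m$ from $b$; $b^*$: finite sequences, with $y\leqslant x$ iff $x$ is an initial segment of $y$. $a_0=\omega$, $d_0=\{\langle x\rangle:x\in\omega^*\}$ with $\langle x\rangle\preccurlyeq_0\langle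 y\rangle$ iff $x\leqslant y$. For $k\geqslant1$: $a_k$ = partial functions $f:d_{k-1}\times\omega\dashrightarrow a_{k-1}$ that are monotonic ($y\preccurlyeq_{k-1}x\Rightarrow f(x,\cdot)\subseteq f(y,\cdot)$) and complete (for each path $S$ in $d_{k-1}$, $\bigcup_{x\in S}f(x,\cdot)$ is total); $d_k=\bigcup_m a_0^{(m)}\times\dots\times a_k^{(m)}$, $x\preccurlyeq_ky$ iff $\langle x\rangle_i\leqslant\langle y\rangle_i$ for all $i\leqslant k$, $lh(x)=m$ on the $m$-th piece. Nodes $M=d_{s-1}$, $\preccurlyeq=\preccurlyeq_{s-1}$, root $\varepsilon=\langle\langle\rangle,\dots,\langle\rangle\rangle$; for $\alpha=\langle\alpha_0,\dots,\alpha_{s-1}\rangle$, $\langle\alpha\rangle_i=\alpha_i$ and $\bar\alpha(k)=\langle\alpha_0,\dots,\alpha_{k-1}\rangle\in d_{k-1}$. Domains: $\omega$; $a_k$; $b_k=\{f\in a_k: f(\text{root of }d_{k-1},\cdot)\text{ total}\}$; $l_k=\{\nu_k(\xi):\xi\in c_k\}$ with $c_k$ the maps $\xi:\omega\times a_{k-1}\to a_{k-1}$ with each $\xi(n,\cdot)$ bijective and $\nu_k(\xi)(x,n)=\xi(n,\langle\langle x\rangle_{k-1}\rangle_n)$ for $n<lh(x)$, undefined otherwise. Interpretations: $\widehat K^1(x,n)=0$, $\widehat K^{k+1}(x,n)=\widehat K^k$; usual $0,S,+,\cdot$; $N^k\mapsto S^k$ with $S^0(x)=x+1$, $S^{n+1}(f)=S^n\circ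 f$; at node $\alpha$, $Ap^k(f,n)\mapsto f(\bar\alpha(k),n)$; $Z^{[\alpha]}$ is the (possibly undefined) value at $\alpha$ of an evaluated term/functional. $Val(\alpha,Z=_kV)=T$ iff $Z^{[\alpha]},V^{[\alpha]}$ defined and equal; $Val(\alpha,\vdash_t\varphi)=T$ iff $t^{[\alpha]}$ defined and some $\gamma$ with $\alpha\preccurlyeq\gamma$, $lh(\gamma)=t^{[\alpha]}$ has $\gamma\Vdash\varphi$. Forcing (Beth): atomic $\varphi$: every path through $\alpha$ meets $\beta$ with $Val(\beta,\varphi)=T$; $\alpha\not\Vdash\bot$; $\wedge$ componentwise; $\vee$: every path through $\alpha$ meets $\beta$ forcing a disjunct; $\psi\supset\eta$: every $\beta\preccurlyeq\alpha$ forcing $\psi$ forces $\eta$; $\forall X\psi$: $\alpha\Vdash\psi(c)$ for all $c$ in the domain; $\exists X\psi$: every path through $\alpha$ meets $\beta$ with $\beta\Vdash\psi(c)$ for some $c$. $\mathcal B_s\Vdash\varphi$ means $\varepsilon\Vdash\varphi$. *)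

theory Defs
  imports Main "HOL-Library.Sublist"
begin

text \<open>Variable kinds: number variables (type 0), general functional variables F^n,
  lawlike functional variables A^n, lawless functional variables (calligraphic F)^n.
  A variable is a triple (kind, type, index).\<close>
datatype vkind = VNum | VGen | VLaw | VLawless

type_synonym var = "vkind \<times> nat \<times> nat"

fun vtype :: "var \<Rightarrow> nat" where
  "vtype (k, n, i) = n"

fun vkind_of :: "var \<Rightarrow> vkind" where
  "vkind_of (k, n, i) = k"

fun valid_var :: "nat \<Rightarrow> var \<Rightarrow> bool" where
  "valid_var s (VNum, n, i) = (n = 0)"
| "valid_var s (k, n, i) = (1 \<le> n \<and> n \<le> s)"

text \<open>Terms and functionals (one datatype; typing below).
  TAp n Z t is Ap^n(Z,t); TN n Z is N^n(Z); TK n is K^n.\<close>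
datatype trm = TVar var | TZero | TK nat | TSuc trm | TPlus trm trm | TTimes trm trm
  | TN nat trm | TAp nat trm trm

fun ty :: "nat \<Rightarrow> trm \<Rightarrow> nat option" where
  "ty s (TVar v) = (if valid_var s v then Some (vtype v) else None)"
| "ty s TZero = Some 0"
| "ty s (TK n) = (if 1 \<le> n \<and> n \<le> s then Some n else None)"
| "ty s (TSuc t) = (if ty s t = Some 0 then Some 0 else None)"
| "ty s (TPlus a b) = (if ty s a = Some 0 \<and> ty s b = Some 0 then Some 0 else None)"
| "ty s (TTimes a b) = (if ty s a = Some 0 \<and> ty s b = Some 0 then Some 0 else None)"
| "ty s (TN n z) = (if 1 \<le> n \<and> ty s z = Some n then Some n else None)"
| "ty s (TAp n z t) = (if 1 \<le> n \<and> ty s z = Some n \<and> ty s t = Some 0 then Some (n - 1) else None)"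

text \<open>Formulas. Eq k a b is a =_k b (k = 0 for number terms). Prov z phi is the
  atomic formula |-_z phi.\<close>
datatype fm = Bot | Eq nat trm trm | Prov trm fm | Conj fm fm | Disj fm fm | Imp fm fm
  | All var fm | Ex var fm

text \<open>wf s b phi: phi is a formula of LP_s (if b) resp. of L_s (if not b).\<close>
fun wf :: "nat \<Rightarrow> bool \<Rightarrow> fm \<Rightarrow> bool" where
  "wf s b Bot = True"
| "wf s b (Eq k x y) = (ty s x = Some k \<and> ty s y = Some k)"
| "wf s b (Prov z \<phi>) = (b \<and> ty s z = Some 0 \<and> wf s False \<phi>)"
| "wf s b (Conj \<phi> \<psi>) = (wf s b \<phi> \<and> wf s b \<psi>)"
| "wf s b (Disj \<phi> \<psi>) = (wf s b \<phi> \<and> wf s b \<psi>)"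
| "wf s b (Imp \<phi> \<psi>) = (wf s b \<phi> \<and> wf s b \<psi>)"
| "wf s b (All v \<phi>) = (valid_var s v \<and> wf s b \<phi>)"
| "wf s b (Ex v \<phi>) = (valid_var s v \<and> wf s b \<phi>)"

fun fvt :: "trm \<Rightarrow> var set" where
  "fvt (TVar v) = {v}"
| "fvt TZero = {}"
| "fvt (TK n) = {}"
| "fvt (TSuc t) = fvt t"
| "fvt (TPlus a b) = fvt a \<union> fvt b"
| "fvt (TTimes a b) = fvt a \<union> fvt b"
| "fvt (TN n z) = fvt z"
| "fvt (TAp n z t) = fvt z \<union> fvt t"

fun fv :: "fm \<Rightarrow> var set" where
  "fv Bot = {}"
| "fv (Eq k x y) = fvt x \<union> fvt y"
| "fv (Prov z \<phi>) = fvt z \<union> fv \<phi>"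
| "fv (Conj \<phi> \<psi>) = fv \<phi> \<union> fv \<psi>"
| "fv (Disj \<phi> \<psi>) = fv \<phi> \<union> fv \<psi>"
| "fv (Imp \<phi> \<psi>) = fv \<phi> \<union> fv \<psi>"
| "fv (All v \<phi>) = fv \<phi> - {v}"
| "fv (Ex v \<phi>) = fv \<phi> - {v}"

definition sort :: "fm \<Rightarrow> nat" where
  "sort \<phi> = Max (insert 0 (vtype ` fv \<phi>))"

definition is_chain :: "('a \<Rightarrow> 'a \<Rightarrow> bool) \<Rightarrow> 'a set \<Rightarrow> bool" where
  "is_chain le P \<longleftrightarrow> (\<forall>x\<in>P. \<forall>y\<in>P. le x y \<or> le y x)"

definition is_path :: "'a set \<Rightarrow> ('a \<Rightarrow> 'a \<Rightarrow> bool) \<Rightarrow> 'a set \<Rightarrow> bool" where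
  "is_path X le P \<longleftrightarrow> P \<subseteq> X \<and> is_chain le P \<and>
     (\<forall>Q. Q \<subseteq> X \<and> is_chain le Q \<and> P \<subseteq> Q \<longrightarrow> Q = P)"

text \<open>The order on d_k: x \<preccurlyeq> y iff each component of y is an initial segment of
  the corresponding component of x.  Elements of d_k are represented as lists
  of k+1 sequences.\<close>
definition nle :: "'u list list \<Rightarrow> 'u list list \<Rightarrow> bool" where
  "nle x y \<longleftrightarrow> length x = length y \<and> (\<forall>i<length x. prefix (y ! i) (x ! i))"

definition lh :: "'u list list \<Rightarrow> nat" where
  "lh x = length (x ! 0)"

text \<open>All objects of all levels live in one type 'u: numbers via ne, and a
  level-(k+1) functional (a partial function d_k \<times> \<omega> \<rightharpoonup> a_k) via en.  The
  theorem assumes ne injective and en injective on each level used, so the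
  structure below is an isomorphic copy of the paper's B_s.\<close>
locale beth =
  fixes ne :: "nat \<Rightarrow> 'u"
    and en :: "('u list list \<times> nat \<Rightarrow> 'u option) \<Rightarrow> 'u"
begin

definition ndec :: "'u \<Rightarrow> nat" where
  "ndec u = inv ne u"

definition Dof :: "(nat \<Rightarrow> 'u set) \<Rightarrow> nat \<Rightarrow> 'u list list set" where
  "Dof As k = {x. length x = Suc k \<and>
      (\<forall>i\<le>k. set (x ! i) \<subseteq> As i \<and> length (x ! i) = length (x ! 0))}"

definition PFof :: "(nat \<Rightarrow> 'u set) \<Rightarrow> nat \<Rightarrow> ('u list list \<times> nat \<Rightarrow> 'u option) set" where
  "PFof As k = {f.
      (\<forall>x n. f (x, n) \<noteq> None \<longrightarrow> x \<in> Dof As k) \<and>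
      (\<forall>x n v. f (x, n) = Some v \<longrightarrow> v \<in> As k) \<and>
      (\<forall>x\<in>Dof As k. \<forall>y\<in>Dof As k. nle y x \<longrightarrow> (\<forall>n v. f (x, n) = Some v \<longrightarrow> f (y, n) = Some v)) \<and>
      (\<forall>P. is_path (Dof As k) nle P \<longrightarrow> (\<forall>n. \<exists>x\<in>P. f (x, n) \<noteq> None))}"

fun Alist :: "nat \<Rightarrow> 'u set list" where
  "Alist 0 = [range ne]"
| "Alist (Suc k) = Alist k @ [en ` PFof (\<lambda>i. Alist k ! i) k]"

definition A :: "nat \<Rightarrow> 'u set" where
  "A k = Alist k ! k"

definition D :: "nat \<Rightarrow> 'u list list set" where
  "D k = Dof A k"

definition PF :: "nat \<Rightarrow> ('u list list \<times> nat \<Rightarrow> 'u option) set" where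
  "PF k = PFof A k"

definition dec :: "nat \<Rightarrow> 'u \<Rightarrow> ('u list list \<times> nat \<Rightarrow> 'u option)" where
  "dec k u = the_inv_into (PF (k - 1)) en u"

text \<open>b_k: lawlike functionals (total at the root of d_(k-1)).\<close>
definition B :: "nat \<Rightarrow> 'u set" where
  "B k = {u \<in> A k. \<forall>n. dec k u (replicate k [], n) \<noteq> None}"

definition C :: "nat \<Rightarrow> (nat \<Rightarrow> 'u \<Rightarrow> 'u) set" where
  "C k = {\<xi>. \<forall>n. bij_betw (\<xi> n) (A (k - 1)) (A (k - 1))}"

definition nu :: "nat \<Rightarrow> (nat \<Rightarrow> 'u \<Rightarrow> 'u) \<Rightarrow> ('u list list \<times> nat \<Rightarrow> 'u option)" where
  "nu k \<xi> = (\<lambda>(x, n). if x \<in> D (k - 1) \<and> n < lh x then Some (\<xi> n ((x ! (k - 1)) ! n)) else None)"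

definition L :: "nat \<Rightarrow> 'u set" where
  "L k = (\<lambda>\<xi>. en (nu k \<xi>)) ` C k"

fun vdom :: "var \<Rightarrow> 'u set" where
  "vdom (VNum, n, i) = A 0"
| "vdom (VGen, n, i) = A n"
| "vdom (VLaw, n, i) = B n"
| "vdom (VLawless, n, i) = L n"

fun Khat :: "nat \<Rightarrow> 'u" where
  "Khat 0 = ne 0"
| "Khat (Suc k) = en (\<lambda>(x, n). if x \<in> D k then Some (Khat k) else None)"

fun Sf :: "nat \<Rightarrow> 'u \<Rightarrow> 'u" where
  "Sf 0 u = ne (Suc (ndec u))"
| "Sf (Suc k) u = en (\<lambda>xn. map_option (Sf k) (dec (Suc k) u xn))"

fun ev :: "'u list list \<Rightarrow> (var \<Rightarrow> 'u) \<Rightarrow> trm \<Rightarrow> 'u option" where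
  "ev \<alpha> \<rho> (TVar v) = Some (\<rho> v)"
| "ev \<alpha> \<rho> TZero = Some (ne 0)"
| "ev \<alpha> \<rho> (TK n) = Some (Khat n)"
| "ev \<alpha> \<rho> (TSuc t) = map_option (\<lambda>u. ne (Suc (ndec u))) (ev \<alpha> \<rho> t)"
| "ev \<alpha> \<rho> (TPlus a b) = (case (ev \<alpha> \<rho> a, ev \<alpha> \<rho> b) of
      (Some x, Some y) \<Rightarrow> Some (ne (ndec x + ndec y)) | _ \<Rightarrow> None)"
| "ev \<alpha> \<rho> (TTimes a b) = (case (ev \<alpha> \<rho> a, ev \<alpha> \<rho> b) of
      (Some x, Some y) \<Rightarrow> Some (ne (ndec x * ndec y)) | _ \<Rightarrow> None)"
| "ev \<alpha> \<rho> (TN n z) = map_option (Sf n) (ev \<alpha> \<rho> z)"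
| "ev \<alpha> \<rho> (TAp n z t) = (case (ev \<alpha> \<rho> z, ev \<alpha> \<rho> t) of
      (Some f, Some m) \<Rightarrow> dec n f (take n \<alpha>, ndec m) | _ \<Rightarrow> None)"

text \<open>Beth forcing in B_s; nodes M = d_(s-1).\<close>
primrec forces :: "nat \<Rightarrow> fm \<Rightarrow> (var \<Rightarrow> 'u) \<Rightarrow> 'u list list \<Rightarrow> bool" where
  "forces s Bot \<rho> \<alpha> = False"
| "forces s (Eq k x y) \<rho> \<alpha> =
     (\<forall>P. is_path (D (s - 1)) nle P \<and> \<alpha> \<in> P \<longrightarrow>
        (\<exists>\<beta>\<in>P. ev \<beta> \<rho> x \<noteq> None \<and> ev \<beta> \<rho> x = ev \<beta> \<rho> y))"
| "forces s (Prov z \<phi>) \<rho> \<alpha> =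
     (\<forall>P. is_path (D (s - 1)) nle P \<and> \<alpha> \<in> P \<longrightarrow>
        (\<exists>\<beta>\<in>P. \<exists>u. ev \<beta> \<rho> z = Some u \<and>
           (\<exists>\<gamma>\<in>D (s - 1). nle \<beta> \<gamma> \<and> lh \<gamma> = ndec u \<and> forces s \<phi> \<rho> \<gamma>)))"
| "forces s (Conj \<phi> \<psi>) \<rho> \<alpha> = (forces s \<phi> \<rho> \<alpha> \<and> forces s \<psi> \<rho> \<alpha>)"
| "forces s (Disj \<phi> \<psi>) \<rho> \<alpha> =
     (\<forall>P. is_path (D (s - 1)) nle P \<and> \<alpha> \<in> P \<longrightarrow>
        (\<exists>\<beta>\<in>P. forces s \<phi> \<rho> \<beta> \<or> forces s \<psi> \<rho> \<beta>))"
| "forces s (Imp \<phi> \<psi>) \<rho> \<alpha> =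
     (\<forall>\<beta>\<in>D (s - 1). nle \<beta> \<alpha> \<longrightarrow> forces s \<phi> \<rho> \<beta> \<longrightarrow> forces s \<psi> \<rho> \<beta>)"
| "forces s (All v \<phi>) \<rho> \<alpha> = (\<forall>c\<in>vdom v. forces s \<phi> (\<rho>(v := c)) \<alpha>)"
| "forces s (Ex v \<phi>) \<rho> \<alpha> =
     (\<forall>P. is_path (D (s - 1)) nle P \<and> \<alpha> \<in> P \<longrightarrow>
        (\<exists>\<beta>\<in>P. \<exists>c\<in>vdom v. forces s \<phi> (\<rho>(v := c)) \<beta>))"

end

end

theory Submission
  imports Defs "HOL-Combinatorics.Transposition"
begin

text \<open>
  Both parts are instances of one invariance principle.  A family \<open>\<theta>\<close> of permutations of the
  levels \<open>a\<^sub>i\<close>, one for every level \<open>i\<close> and position \<open>n\<close>, acts position-wise on the nodes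
  of \<open>\<B>\<^sub>s\<close> and lifts level by level to all domains \<open>a\<^sub>k\<close>, \<open>b\<^sub>k\<close>, \<open>l\<^sub>k\<close>, fixing the numbers.
  Together these maps form an automorphism of \<open>\<B>\<^sub>s\<close>, so forcing is preserved.

  For (1), swap the entries of \<open>\<alpha>\<close> and \<open>\<beta>\<close> position by position: below level \<open>m\<close>, where
  \<open>\<alpha>\<close> and \<open>\<beta>\<close> agree, this is the identity, so every object of type at most \<open>m\<close> is fixed,
  while \<open>\<alpha>\<close> is carried to \<open>\<beta>\<close>.  For (2), write \<open>g = \<nu>(\<xi>)\<close> and \<open>h = \<nu>(\<xi>')\<close>; the
  permutations \<open>\<xi>\<^sub>n\<inverse> \<circ> \<xi>'\<^sub>n\<close> of level \<open>p - 1\<close> carry \<open>g\<close> to \<open>h\<close>.  They fix \<open>\<alpha>\<close> because \<open>g\<close>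
  and \<open>h\<close> agree along \<open>\<alpha>\<close>, they fix every object of type below \<open>p\<close>, and they fix the
  lawlike functionals of type \<open>p\<close>, which are constant on the tree; by hypothesis these are
  the only other free variables of type \<open>p\<close>.
\<close>

lemma prefix_iff_nth: "prefix a b \<longleftrightarrow> length a \<le> length b \<and> (\<forall>n<length a. a ! n = b ! n)"
proof
  assume "prefix a b"
  then obtain r where "b = a @ r" by (auto simp: prefix_def)
  then show "length a \<le> length b \<and> (\<forall>n<length a. a ! n = b ! n)" by (auto simp: nth_append)
next
  assume "length a \<le> length b \<and> (\<forall>n<length a. a ! n = b ! n)"
  then have "take (length a) b = a" by (intro nth_equalityI) auto
  then show "prefix a b" by (metis take_is_prefix)
qed

lemma map_option_inj_on_eq_iff:
  assumes "set_option a \<subseteq> S" "set_option b \<subseteq> S" "inj_on f S"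
  shows "map_option f a = map_option f b \<longleftrightarrow> a = b"
  using assms by (cases a; cases b) (auto dest: inj_onD)

definition map_pos :: "(nat \<Rightarrow> 'a \<Rightarrow> 'b) \<Rightarrow> 'a list \<Rightarrow> 'b list" where
  "map_pos f xs = map (\<lambda>n. f n (xs ! n)) [0..<length xs]"

lemma length_map_pos [simp]: "length (map_pos f xs) = length xs"
  by (simp add: map_pos_def)

lemma nth_map_pos [simp]: "n < length xs \<Longrightarrow> map_pos f xs ! n = f n (xs ! n)"
  by (simp add: map_pos_def)

lemma map_pos_inverse: "(\<And>n v. g n (f n v) = v) \<Longrightarrow> map_pos g (map_pos f xs) = xs"
  by (rule nth_equalityI) auto

lemma take_map_pos: "take k (map_pos f xs) = map_pos f (take k xs)"
  by (rule nth_equalityI) auto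

lemma prefix_map_pos: "prefix xs ys \<Longrightarrow> prefix (map_pos f xs) (map_pos f ys)"
  by (auto simp: prefix_iff_nth)

lemma set_map_pos_subset_iff: "set (map_pos f xs) \<subseteq> S \<longleftrightarrow> (\<forall>n<length xs. f n (xs ! n) \<in> S)"
  by (auto simp: map_pos_def)

definition node_map :: "(nat \<Rightarrow> nat \<Rightarrow> 'a \<Rightarrow> 'a) \<Rightarrow> 'a list list \<Rightarrow> 'a list list" where
  "node_map \<theta> = map_pos (\<lambda>i. map_pos (\<theta> i))"

lemma length_node_map [simp]: "length (node_map \<theta> x) = length x"
  by (simp add: node_map_def)

lemma nth_node_map [simp]: "i < length x \<Longrightarrow> node_map \<theta> x ! i = map_pos (\<theta> i) (x ! i)"
  by (simp add: node_map_def)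

lemma node_map_inverse: "(\<And>i n v. \<theta>' i n (\<theta> i n v) = v) \<Longrightarrow> node_map \<theta>' (node_map \<theta> x) = x"
  by (simp add: node_map_def map_pos_inverse)

lemma take_node_map: "take k (node_map \<theta> x) = node_map \<theta> (take k x)"
  by (simp add: node_map_def take_map_pos)

lemma node_map_replicate_Nil: "node_map \<theta> (replicate k []) = replicate k []"
  by (rule nth_equalityI) (auto simp: map_pos_def)

lemma lh_node_map: "x \<noteq> [] \<Longrightarrow> lh (node_map \<theta> x) = lh x"
  by (simp add: lh_def)

definition swap_perms :: "'a list list \<Rightarrow> 'a list list \<Rightarrow> nat \<Rightarrow> nat \<Rightarrow> 'a \<Rightarrow> 'a" where
  "swap_perms \<alpha> \<beta> i n =
    (if i < length \<alpha> \<and> n < lh \<alpha> then Transposition.transpose (\<alpha> ! i ! n) (\<beta> ! i ! n) else id)"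

lemma nle_refl: "nle x x"
  by (simp add: nle_def)

lemma nle_trans: "nle x y \<Longrightarrow> nle y z \<Longrightarrow> nle x z"
  unfolding nle_def using prefix_order.trans by fastforce

lemma nle_node_map: "nle y x \<Longrightarrow> nle (node_map \<theta> y) (node_map \<theta> x)"
  by (auto simp: nle_def prefix_map_pos)

lemma is_path_image:
  assumes "is_path X le P"
    and inv: "\<And>x. g (f x) = x" "\<And>x. f (g x) = x"
    and dom: "\<And>x. f x \<in> X \<longleftrightarrow> x \<in> X"
    and ord: "\<And>x y. le (f x) (f y) \<longleftrightarrow> le x y"
  shows "is_path X le (f ` P)"
proof -
  have dom': "g x \<in> X \<longleftrightarrow> x \<in> X" and ord': "le (g x) (g y) \<longleftrightarrow> le x y" for x y
    using dom[of "g x"] ord[of "g x" "g y"] by (simp_all only: inv)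
  have P: "P \<subseteq> X" "is_chain le P" and max: "\<And>Q. Q \<subseteq> X \<Longrightarrow> is_chain le Q \<Longrightarrow> P \<subseteq> Q \<Longrightarrow> Q = P"
    using assms(1) by (auto simp: is_path_def)
  show ?thesis unfolding is_path_def
  proof (intro conjI allI impI)
    show "f ` P \<subseteq> X" "is_chain le (f ` P)"
      using P dom ord by (auto simp: is_chain_def)
    fix Q assume Q: "Q \<subseteq> X \<and> is_chain le Q \<and> f ` P \<subseteq> Q"
    have "g ` Q = P"
    proof (rule max)
      show "g ` Q \<subseteq> X" "is_chain le (g ` Q)" using Q dom' ord' by (auto simp: is_chain_def)
      show "P \<subseteq> g ` Q"
      proof
        fix x assume "x \<in> P"
        then have "g (f x) \<in> g ` Q" using Q by blast
        then show "x \<in> g ` Q" by (simp only: inv)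
      qed
    qed
    then have "f ` P = (\<lambda>x. f (g x)) ` Q" by (auto simp: image_image)
    then show "Q = f ` P" by (simp only: inv image_ident)
  qed
qed

lemma ty_le: "ty s t = Some k \<Longrightarrow> k \<le> s"
  by (induction t arbitrary: k) (auto split: if_splits elim: valid_var.elims)

lemma fvt_valid_var: "ty s t = Some k \<Longrightarrow> v \<in> fvt t \<Longrightarrow> valid_var s v"
  by (induction t arbitrary: k) (auto split: if_splits)

lemma fv_valid_var: "wf s b \<phi> \<Longrightarrow> v \<in> fv \<phi> \<Longrightarrow> valid_var s v"
  by (induction \<phi> arbitrary: b) (auto dest: fvt_valid_var)

lemma finite_fv: "finite (fv \<phi>)"
proof -
  have "finite (fvt t)" for t by (induction t) auto
  then show ?thesis by (induction \<phi>) auto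
qed

lemma vtype_le_sort: "v \<in> fv \<phi> \<Longrightarrow> vtype v \<le> sort \<phi>"
  unfolding sort_def using finite_fv[of \<phi>] by (intro Max_ge) auto

lemma valid_var_vtype_le: "valid_var s v \<Longrightarrow> vtype v \<le> s"
  by (cases v, rename_tac kd n i, case_tac kd) auto

context beth
begin

section \<open>The Beth tree\<close>

lemma length_Alist: "length (Alist k) = Suc k"
  by (induction k) auto

lemma Alist_nth: "i \<le> k \<Longrightarrow> Alist k ! i = A i"
proof (induction k arbitrary: i)
  case 0
  then show ?case by (simp add: A_def)
next
  case (Suc k)
  then show ?case by (cases "i = Suc k") (auto simp: A_def nth_append length_Alist)
qed

lemma PFof_cong: "(\<And>i. i \<le> k \<Longrightarrow> As i = Bs i) \<Longrightarrow> PFof As k = PFof Bs k"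
  by (simp add: PFof_def Dof_def)

lemma A_0: "A 0 = range ne"
  by (simp add: A_def)

lemma A_Suc: "A (Suc k) = en ` PF k"
proof -
  have "A (Suc k) = en ` PFof (\<lambda>i. Alist k ! i) k"
    by (simp add: A_def nth_append length_Alist)
  also have "PFof (\<lambda>i. Alist k ! i) k = PF k"
    unfolding PF_def by (rule PFof_cong) (simp add: Alist_nth)
  finally show ?thesis .
qed

lemma mem_D_iff:
  "x \<in> D k \<longleftrightarrow> length x = Suc k \<and> (\<forall>i\<le>k. set (x ! i) \<subseteq> A i \<and> length (x ! i) = lh x)"
  by (simp add: D_def Dof_def lh_def)

lemma mem_PF_iff: "f \<in> PF k \<longleftrightarrow>
    (\<forall>x n. f (x, n) \<noteq> None \<longrightarrow> x \<in> D k) \<and>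
    (\<forall>x n v. f (x, n) = Some v \<longrightarrow> v \<in> A k) \<and>
    (\<forall>x\<in>D k. \<forall>y\<in>D k. nle y x \<longrightarrow> (\<forall>n v. f (x, n) = Some v \<longrightarrow> f (y, n) = Some v)) \<and>
    (\<forall>P. is_path (D k) nle P \<longrightarrow> (\<forall>n. \<exists>x\<in>P. f (x, n) \<noteq> None))"
  by (simp add: PF_def PFof_def D_def)

lemma
  assumes "f \<in> PF k"
  shows PF_domain: "f (x, n) \<noteq> None \<Longrightarrow> x \<in> D k"
    and PF_range: "f (x, n) = Some v \<Longrightarrow> v \<in> A k"
    and PF_mono: "x \<in> D k \<Longrightarrow> y \<in> D k \<Longrightarrow> nle y x \<Longrightarrow> f (x, n) = Some v \<Longrightarrow> f (y, n) = Some v"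
    and PF_defined_on_path: "is_path (D k) nle P \<Longrightarrow> \<exists>x\<in>P. f (x, n) \<noteq> None"
  using assms unfolding mem_PF_iff by blast+

lemma length_D: "x \<in> D k \<Longrightarrow> length x = Suc k"
  by (simp add: mem_D_iff)

lemma root_in_D: "replicate (Suc k) [] \<in> D k"
  by (auto simp del: replicate_Suc simp: mem_D_iff lh_def)

lemma nle_root: "x \<in> D k \<Longrightarrow> nle x (replicate (Suc k) [])"
  by (auto simp del: replicate_Suc simp: nle_def mem_D_iff)

lemma path_nonempty: "is_path (D k) nle P \<Longrightarrow> P \<noteq> {}"
  using root_in_D[of k] by (auto simp: is_path_def is_chain_def nle_refl)

lemma const_in_PF:
  assumes "a \<in> A k"
  shows "(\<lambda>(x, n). if x \<in> D k then Some a else None) \<in> PF k"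
proof -
  have "\<exists>x\<in>P. x \<in> D k" if "is_path (D k) nle P" for P
    using path_nonempty[OF that] that by (auto simp: is_path_def)
  with assms show ?thesis unfolding mem_PF_iff by (auto split: if_splits)
qed

lemma A_nonempty: "A k \<noteq> {}"
proof (induction k)
  case 0
  then show ?case by (simp add: A_0)
next
  case (Suc k)
  then obtain a where "a \<in> A k" by auto
  then show ?case using const_in_PF[of a k] by (auto simp: A_Suc)
qed

lemma lh_antimono: "nle y x \<Longrightarrow> x \<noteq> [] \<Longrightarrow> lh x \<le> lh y"
  by (auto simp: nle_def lh_def prefix_length_le)

lemma D_eqI:
  assumes "x \<in> D k" "y \<in> D k" "nle x y" "lh x = lh y"
  shows "x = y"
proof (rule nth_equalityI)
  show "length x = length y" using assms by (simp add: mem_D_iff)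
  fix i assume "i < length x"
  then have "prefix (y ! i) (x ! i)" "length (y ! i) = length (x ! i)"
    using assms by (auto simp: nle_def mem_D_iff)
  then show "x ! i = y ! i"
    using prefix_length_prefix[of "x ! i" "x ! i" "y ! i"] prefix_order.antisym by auto
qed

lemma D_entry_in_A:
  assumes "x \<in> D k" "i \<le> k" "n < lh x"
  shows "x ! i ! n \<in> A i"
proof -
  have "set (x ! i) \<subseteq> A i" "n < length (x ! i)" using assms by (simp_all add: mem_D_iff)
  then show ?thesis using nth_mem by blast
qed

lemma D_extend:
  assumes x: "x \<in> D k"
  obtains x' where "x' \<in> D k" "nle x' x" "lh x' = Suc (lh x)"
proof
  define x' where "x' = map (\<lambda>i. x ! i @ [SOME a. a \<in> A i]) [0..<length x]"
  have x'_nth: "x' ! i = x ! i @ [SOME a. a \<in> A i]" if "i \<le> k" for i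
    using that length_D[OF x] by (simp add: x'_def del: upt_Suc)
  show lh_x': "lh x' = Suc (lh x)"
    using x'_nth[of 0] by (simp add: lh_def)
  show "nle x' x" by (auto simp: x'_def nle_def)
  show "x' \<in> D k" unfolding mem_D_iff
  proof (intro conjI allI impI)
    show "length x' = Suc k" using length_D[OF x] by (simp add: x'_def)
    fix i assume "i \<le> k"
    moreover have "(SOME a. a \<in> A i) \<in> A i" using A_nonempty by (simp add: some_in_eq)
    ultimately show "set (x' ! i) \<subseteq> A i" "length (x' ! i) = lh x'"
      using x lh_x' by (simp_all add: x'_nth mem_D_iff)
  qed
qed

text \<open>A path cannot stop: a node of maximal length on it could be extended, contradicting the
  maximality of the path.\<close>

lemma path_unbounded:
  assumes P: "is_path (D k) nle P"
  shows "\<exists>x\<in>P. n < lh x"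
proof (rule ccontr)
  assume "\<not> ?thesis"
  then have bound: "lh ` P \<subseteq> {..n}" by auto
  have PD: "P \<subseteq> D k" and chain: "is_chain nle P"
    and max: "\<And>Q. Q \<subseteq> D k \<Longrightarrow> is_chain nle Q \<Longrightarrow> P \<subseteq> Q \<Longrightarrow> Q = P"
    using P by (auto simp: is_path_def)
  have "inj_on lh P"
  proof (rule inj_onI)
    fix x y assume "x \<in> P" "y \<in> P" "lh x = lh y"
    then show "x = y" using chain PD D_eqI[of x k y] D_eqI[of y k x] by (auto simp: is_chain_def)
  qed
  then have fin: "finite (lh ` P)"
    using bound finite_subset by blast
  moreover have "lh ` P \<noteq> {}"
    using path_nonempty[OF P] by simp
  ultimately obtain x where xP: "x \<in> P" and x_Max: "lh x = Max (lh ` P)"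
    using Max_in by (metis imageE)
  have xmax: "lh y \<le> lh x" if "y \<in> P" for y
    unfolding x_Max using fin that by (simp add: Max_ge)
  have xD: "x \<in> D k" using xP PD by auto
  obtain x' where x': "x' \<in> D k" "nle x' x" "lh x' = Suc (lh x)"
    using D_extend[OF xD] .
  have "nle x y" if "y \<in> P" for y
  proof (cases "nle y x")
    case True
    moreover have "x \<noteq> []" using length_D[OF xD] by auto
    ultimately have "lh x \<le> lh y" by (rule lh_antimono)
    then have "lh y = lh x" using xmax[OF that] by simp
    then show ?thesis using D_eqI[OF _ xD True] that PD nle_refl by auto
  qed (use chain xP that in \<open>auto simp: is_chain_def\<close>)
  then have "nle x' y" if "y \<in> P" for y
    using x'(2) that nle_trans by blast
  then have "is_chain nle (insert x' P)"
    using chain by (auto simp: is_chain_def nle_refl)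
  then have "x' \<in> P" using max[of "insert x' P"] x'(1) PD by auto
  then show False using xmax x'(3) by fastforce
qed

lemma take_in_D:
  assumes "\<alpha> \<in> D j" "k \<le> j"
  shows "take (Suc k) \<alpha> \<in> D k" "lh (take (Suc k) \<alpha>) = lh \<alpha>"
proof -
  show lh: "lh (take (Suc k) \<alpha>) = lh \<alpha>" by (simp add: lh_def)
  show "take (Suc k) \<alpha> \<in> D k" unfolding mem_D_iff
  proof (intro conjI allI impI)
    show "length (take (Suc k) \<alpha>) = Suc k" using assms by (simp add: length_D)
    fix i assume "i \<le> k"
    then show "set (take (Suc k) \<alpha> ! i) \<subseteq> A i" "length (take (Suc k) \<alpha> ! i) = lh (take (Suc k) \<alpha>)"
      using assms lh by (simp_all add: mem_D_iff)
  qed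
qed

lemma nu_Suc: "nu (Suc k) \<xi> (x, n) = (if x \<in> D k \<and> n < lh x then Some (\<xi> n (x ! k ! n)) else None)"
  by (simp add: nu_def)

lemma nu_in_PF:
  assumes "\<xi> \<in> C (Suc k)"
  shows "nu (Suc k) \<xi> \<in> PF k"
  unfolding mem_PF_iff
proof (intro conjI allI impI ballI)
  have bij: "bij_betw (\<xi> n) (A k) (A k)" for n using assms by (simp add: C_def)
  fix x n
  show "nu (Suc k) \<xi> (x, n) \<noteq> None \<Longrightarrow> x \<in> D k" by (simp add: nu_Suc split: if_splits)
  fix v
  show "nu (Suc k) \<xi> (x, n) = Some v \<Longrightarrow> v \<in> A k"
    using D_entry_in_A[of x k k n] bij_betwE[OF bij] by (auto simp: nu_Suc split: if_splits)
next
  fix x y n v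
  assume xy: "x \<in> D k" "y \<in> D k" "nle y x" and "nu (Suc k) \<xi> (x, n) = Some v"
  then have n: "n < lh x" and v: "v = \<xi> n (x ! k ! n)" by (auto simp: nu_Suc split: if_splits)
  have "lh x \<le> lh y" by (rule lh_antimono[OF xy(3)]) (use length_D[OF xy(1)] in auto)
  moreover have "prefix (x ! k) (y ! k)" "n < length (x ! k)"
    using xy n by (auto simp: nle_def mem_D_iff)
  ultimately show "nu (Suc k) \<xi> (y, n) = Some v" using xy(2) n v by (auto simp: nu_Suc prefix_iff_nth)
next
  fix P n
  assume P: "is_path (D k) nle P"
  then obtain x where "x \<in> P" "n < lh x" using path_unbounded by blast
  moreover have "x \<in> D k" using P \<open>x \<in> P\<close> by (auto simp: is_path_def)
  ultimately show "\<exists>x\<in>P. nu (Suc k) \<xi> (x, n) \<noteq> None" by (auto simp: nu_Suc)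
qed

lemma L_subset_A: "L (Suc k) \<subseteq> A (Suc k)"
  using nu_in_PF by (auto simp: L_def A_Suc)

lemma B_subset_A: "B k \<subseteq> A k"
  by (auto simp: B_def)

lemma nu_cong: "(\<And>n v. v \<in> A k \<Longrightarrow> \<xi> n v = \<xi>' n v) \<Longrightarrow> nu (Suc k) \<xi> = nu (Suc k) \<xi>'"
  by (auto simp: fun_eq_iff nu_Suc D_entry_in_A)

lemma vdom_subset_A: "valid_var s v \<Longrightarrow> vdom v \<subseteq> A (vtype v)"
proof (cases v)
  case (fields kd n i)
  then show "valid_var s v \<Longrightarrow> vdom v \<subseteq> A (vtype v)"
    using B_subset_A L_subset_A by (cases kd; cases n) auto
qed

lemma ev_cong: "(\<And>v. v \<in> fvt t \<Longrightarrow> \<rho> v = \<rho>' v) \<Longrightarrow> ev \<alpha> \<rho> t = ev \<alpha> \<rho>' t"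
  by (induction t) auto

lemma forces_cong: "(\<And>v. v \<in> fv \<phi> \<Longrightarrow> \<rho> v = \<rho>' v) \<Longrightarrow> forces s \<phi> \<rho> \<alpha> = forces s \<phi> \<rho>' \<alpha>"
proof (induction \<phi> arbitrary: \<rho> \<rho>' \<alpha>)
  case (Eq k x y)
  have "ev \<beta> \<rho> x = ev \<beta> \<rho>' x" "ev \<beta> \<rho> y = ev \<beta> \<rho>' y" for \<beta>
    by (rule ev_cong, use Eq.prems in simp)+
  then show ?case by (simp only: forces.simps)
next
  case (Prov z \<phi>)
  have "ev \<beta> \<rho> z = ev \<beta> \<rho>' z" for \<beta>
    by (rule ev_cong) (use Prov.prems in simp)
  moreover have "forces s \<phi> \<rho> \<beta> = forces s \<phi> \<rho>' \<beta>" for \<beta>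
    by (rule Prov.IH) (use Prov.prems in simp)
  ultimately show ?case by (simp only: forces.simps)
next
  case (Conj \<phi> \<psi>)
  have "forces s \<phi> \<rho> \<beta> = forces s \<phi> \<rho>' \<beta>" "forces s \<psi> \<rho> \<beta> = forces s \<psi> \<rho>' \<beta>" for \<beta>
    by (rule Conj.IH(1), use Conj.prems in simp) (rule Conj.IH(2), use Conj.prems in simp)
  then show ?case by simp
next
  case (Disj \<phi> \<psi>)
  have "forces s \<phi> \<rho> \<beta> = forces s \<phi> \<rho>' \<beta>" "forces s \<psi> \<rho> \<beta> = forces s \<psi> \<rho>' \<beta>" for \<beta>
    by (rule Disj.IH(1), use Disj.prems in simp) (rule Disj.IH(2), use Disj.prems in simp)
  then show ?case by simp
next
  case (Imp \<phi> \<psi>)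
  have "forces s \<phi> \<rho> \<beta> = forces s \<phi> \<rho>' \<beta>" "forces s \<psi> \<rho> \<beta> = forces s \<psi> \<rho>' \<beta>" for \<beta>
    by (rule Imp.IH(1), use Imp.prems in simp) (rule Imp.IH(2), use Imp.prems in simp)
  then show ?case by simp
next
  case (All v \<phi>)
  have "forces s \<phi> (\<rho>(v := c)) \<beta> = forces s \<phi> (\<rho>'(v := c)) \<beta>" for c \<beta>
    by (rule All.IH) (use All.prems in simp)
  then show ?case by simp
next
  case (Ex v \<phi>)
  have "forces s \<phi> (\<rho>(v := c)) \<beta> = forces s \<phi> (\<rho>'(v := c)) \<beta>" for c \<beta>
    by (rule Ex.IH) (use Ex.prems in simp)
  then show ?case by simp
qed simp

section \<open>Automorphisms induced by level permutations\<close>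

definition level_perms :: "(nat \<Rightarrow> nat \<Rightarrow> 'u \<Rightarrow> 'u) \<Rightarrow> (nat \<Rightarrow> nat \<Rightarrow> 'u \<Rightarrow> 'u) \<Rightarrow> bool" where
  "level_perms \<theta> \<theta>' \<longleftrightarrow> (\<forall>i n v. \<theta>' i n (\<theta> i n v) = v) \<and> (\<forall>i n v. \<theta> i n (\<theta>' i n v) = v) \<and>
     (\<forall>i n v. \<theta> i n v \<in> A i \<longleftrightarrow> v \<in> A i)"

lemma level_perms_id: "level_perms (\<lambda>i n v. v) (\<lambda>i n v. v)"
  by (simp add: level_perms_def)

lemma level_perms_sym:
  assumes "level_perms \<theta> \<theta>'"
  shows "level_perms \<theta>' \<theta>"
proof -
  have "\<theta>' i n v \<in> A i \<longleftrightarrow> \<theta> i n (\<theta>' i n v) \<in> A i" for i n v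
    using assms unfolding level_perms_def by blast
  then have "\<theta>' i n v \<in> A i \<longleftrightarrow> v \<in> A i" for i n v
    using assms unfolding level_perms_def by simp
  then show ?thesis using assms by (simp add: level_perms_def)
qed

lemma bij_betw_level_perm: "level_perms \<theta> \<theta>' \<Longrightarrow> bij_betw (\<theta> i n) (A i) (A i)"
  using level_perms_sym[of \<theta> \<theta>']
  by (intro bij_betw_byWitness[where f' = "\<theta>' i n"]) (auto simp: level_perms_def)

lemma node_map_inverse_perm: "level_perms \<theta> \<theta>' \<Longrightarrow> node_map \<theta>' (node_map \<theta> x) = x"
  by (rule node_map_inverse) (simp add: level_perms_def)

lemma node_map_in_D_iff:
  assumes "level_perms \<theta> \<theta>'"
  shows "node_map \<theta> x \<in> D k \<longleftrightarrow> x \<in> D k"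
proof (cases "length x = Suc k")
  case True
  have "\<theta> i n v \<in> A i \<longleftrightarrow> v \<in> A i" for i n v
    using assms by (simp add: level_perms_def)
  then have "set (map_pos (\<theta> i) c) \<subseteq> A i \<longleftrightarrow> set c \<subseteq> A i" for i c
    by (simp add: set_map_pos_subset_iff subset_code(1) all_set_conv_all_nth)
  moreover have "lh (node_map \<theta> x) = lh x"
    using True by (simp add: lh_def)
  moreover have "node_map \<theta> x ! i = map_pos (\<theta> i) (x ! i)" if "i \<le> k" for i
    using True that by simp
  ultimately show ?thesis
    using True unfolding mem_D_iff by simp
qed (simp add: mem_D_iff)

lemma nle_node_map_iff:
  assumes "level_perms \<theta> \<theta>'"
  shows "nle (node_map \<theta> y) (node_map \<theta> x) \<longleftrightarrow> nle y x"
  using nle_node_map[of "node_map \<theta> y" "node_map \<theta> x" \<theta>'] nle_node_map[of y x \<theta>]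
  by (auto simp: node_map_inverse_perm[OF assms])

lemma lh_node_map_D: "x \<in> D k \<Longrightarrow> lh (node_map \<theta> x) = lh x"
  by (rule lh_node_map) (auto dest: length_D)

lemma is_path_node_map:
  assumes "level_perms \<theta> \<theta>'" "is_path (D k) nle P"
  shows "is_path (D k) nle (node_map \<theta> ` P)"
  using assms(2) node_map_inverse_perm[OF assms(1)]
    node_map_inverse_perm[OF level_perms_sym[OF assms(1)]]
    node_map_in_D_iff[OF assms(1)] nle_node_map_iff[OF assms(1)]
  by (rule is_path_image)

lemma PF_comp_node_map:
  assumes perms: "level_perms \<theta> \<theta>'" and g: "\<And>v. v \<in> A k \<Longrightarrow> g v \<in> A k" and f: "f \<in> PF k"
  shows "(\<lambda>(x, n). map_option g (f (node_map \<theta> x, n))) \<in> PF k"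
  unfolding mem_PF_iff
proof (intro conjI allI impI ballI)
  fix x n
  assume "(case (x, n) of (x, n) \<Rightarrow> map_option g (f (node_map \<theta> x, n))) \<noteq> None"
  then show "x \<in> D k" using PF_domain[OF f] node_map_in_D_iff[OF perms] by auto
next
  fix x n v
  assume "(case (x, n) of (x, n) \<Rightarrow> map_option g (f (node_map \<theta> x, n))) = Some v"
  then show "v \<in> A k" using PF_range[OF f] g by auto
next
  fix x y n v
  assume "x \<in> D k" "y \<in> D k" "nle y x"
    and "(case (x, n) of (x, n) \<Rightarrow> map_option g (f (node_map \<theta> x, n))) = Some v"
  then show "(case (y, n) of (x, n) \<Rightarrow> map_option g (f (node_map \<theta> x, n))) = Some v"
    using PF_mono[OF f, of "node_map \<theta> x" "node_map \<theta> y" n]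
      node_map_in_D_iff[OF perms] nle_node_map_iff[OF perms] by auto
next
  fix P n
  assume "is_path (D k) nle P"
  then show "\<exists>x\<in>P. (case (x, n) of (x, n) \<Rightarrow> map_option g (f (node_map \<theta> x, n))) \<noteq> None"
    using PF_defined_on_path[OF f, of "node_map \<theta> ` P" n] is_path_node_map[OF perms] by auto
qed

lemma PF_comp: "(\<And>v. v \<in> A k \<Longrightarrow> g v \<in> A k) \<Longrightarrow> f \<in> PF k \<Longrightarrow> (\<lambda>xn. map_option g (f xn)) \<in> PF k"
  using PF_comp_node_map[OF level_perms_id] by (simp add: node_map_def map_pos_def map_nth case_prod_beta')

text \<open>A family of level permutations \<open>\<theta>\<close> with inverse \<open>\<theta>'\<close> induces an automorphism of the
  model: objects are moved by \<open>lift_perm \<theta>\<close> and nodes by \<open>node_map \<theta>'\<close>.\<close>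

primrec lift_perm :: "(nat \<Rightarrow> nat \<Rightarrow> 'u \<Rightarrow> 'u) \<Rightarrow> nat \<Rightarrow> 'u \<Rightarrow> 'u" where
  "lift_perm \<theta> 0 u = u"
| "lift_perm \<theta> (Suc k) u =
    en (\<lambda>(x, n). map_option (lift_perm \<theta> k) (dec (Suc k) u (node_map \<theta> x, n)))"

declare lift_perm.simps(2) [simp del]

lemma lift_perm_0 [simp]: "lift_perm \<theta> 0 = id"
  by (simp add: fun_eq_iff)

definition lift_env :: "(nat \<Rightarrow> nat \<Rightarrow> 'u \<Rightarrow> 'u) \<Rightarrow> (var \<Rightarrow> 'u) \<Rightarrow> var \<Rightarrow> 'u" where
  "lift_env \<theta> \<rho> v = lift_perm \<theta> (vtype v) (\<rho> v)"

lemma lift_env_upd: "lift_env \<theta> (\<rho>(v := c)) = (lift_env \<theta> \<rho>)(v := lift_perm \<theta> (vtype v) c)"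
  by (rule ext) (simp add: lift_env_def)

lemma all_paths_node_map_iff:
  assumes perms: "level_perms \<theta> \<theta>'"
    and Q: "\<And>\<beta>. \<beta> \<in> D k \<Longrightarrow> Q \<beta> \<longleftrightarrow> Q' (node_map \<theta>' \<beta>)"
  shows "(\<forall>P. is_path (D k) nle P \<and> \<alpha> \<in> P \<longrightarrow> (\<exists>\<beta>\<in>P. Q \<beta>)) \<longleftrightarrow>
    (\<forall>P. is_path (D k) nle P \<and> node_map \<theta>' \<alpha> \<in> P \<longrightarrow> (\<exists>\<beta>\<in>P. Q' \<beta>))"
proof -
  have perms': "level_perms \<theta>' \<theta>" by (rule level_perms_sym[OF perms])
  have Q_image: "(\<exists>\<beta>\<in>node_map \<theta>' ` P. Q' \<beta>) \<longleftrightarrow> (\<exists>\<beta>\<in>P. Q \<beta>)" if "is_path (D k) nle P" for P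
    using that Q by (auto simp: is_path_def)
  show ?thesis
  proof (intro iffI allI impI)
    fix P
    assume hyp: "\<forall>P. is_path (D k) nle P \<and> \<alpha> \<in> P \<longrightarrow> (\<exists>\<beta>\<in>P. Q \<beta>)"
      and P: "is_path (D k) nle P \<and> node_map \<theta>' \<alpha> \<in> P"
    have path: "is_path (D k) nle (node_map \<theta> ` P)" using is_path_node_map[OF perms] P by blast
    moreover have "\<alpha> \<in> node_map \<theta> ` P"
      using P node_map_inverse_perm[OF perms'] by (metis image_eqI)
    ultimately have "\<exists>\<beta>\<in>node_map \<theta>' ` node_map \<theta> ` P. Q' \<beta>" using hyp Q_image by blast
    moreover have "node_map \<theta>' ` node_map \<theta> ` P = P"
      using node_map_inverse_perm[OF perms] by (simp add: image_comp comp_def)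
    ultimately show "\<exists>\<beta>\<in>P. Q' \<beta>" by simp
  next
    fix P
    assume "\<forall>P. is_path (D k) nle P \<and> node_map \<theta>' \<alpha> \<in> P \<longrightarrow> (\<exists>\<beta>\<in>P. Q' \<beta>)"
      and "is_path (D k) nle P \<and> \<alpha> \<in> P"
    then show "\<exists>\<beta>\<in>P. Q \<beta>" using is_path_node_map[OF perms'] Q_image by blast
  qed
qed

lemma bij_betw_node_map: "level_perms \<theta> \<theta>' \<Longrightarrow> bij_betw (node_map \<theta>) (D k) (D k)"
  using level_perms_sym node_map_in_D_iff node_map_inverse_perm
  by (intro bij_betw_byWitness[where f' = "node_map \<theta>'"]) blast+

lemma ex_D_node_map_iff:
  assumes perms: "level_perms \<theta> \<theta>'" and Q: "\<And>\<beta>. \<beta> \<in> D k \<Longrightarrow> Q \<beta> \<longleftrightarrow> Q' (node_map \<theta>' \<beta>)"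
  shows "(\<exists>\<beta>\<in>D k. Q \<beta>) \<longleftrightarrow> (\<exists>\<beta>\<in>D k. Q' \<beta>)"
  using bij_betw_ball[OF bij_betw_node_map[OF level_perms_sym[OF perms]], where phi = "\<lambda>\<beta>. \<not> Q' \<beta>"] Q by blast

lemma all_D_node_map_iff:
  assumes perms: "level_perms \<theta> \<theta>'" and Q: "\<And>\<beta>. \<beta> \<in> D k \<Longrightarrow> Q \<beta> \<longleftrightarrow> Q' (node_map \<theta>' \<beta>)"
  shows "(\<forall>\<beta>\<in>D k. Q \<beta>) \<longleftrightarrow> (\<forall>\<beta>\<in>D k. Q' \<beta>)"
  using ex_D_node_map_iff[OF perms, of k "\<lambda>\<beta>. \<not> Q \<beta>" "\<lambda>\<beta>. \<not> Q' \<beta>"] Q by blast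

lemma level_perms_swap_perms:
  assumes "\<alpha> \<in> D k" "\<beta> \<in> D k" "lh \<alpha> = lh \<beta>"
  shows "level_perms (swap_perms \<alpha> \<beta>) (swap_perms \<alpha> \<beta>)"
proof -
  have "swap_perms \<alpha> \<beta> i n v \<in> A i \<longleftrightarrow> v \<in> A i" for i n v
  proof (cases "i < length \<alpha> \<and> n < lh \<alpha>")
    case True
    then have "\<alpha> ! i ! n \<in> A i" "\<beta> ! i ! n \<in> A i"
      using assms D_entry_in_A length_D by (metis less_Suc_eq_le)+
    then show ?thesis using True by (auto simp: swap_perms_def transpose_def)
  qed (auto simp: swap_perms_def)
  then show ?thesis by (simp add: level_perms_def swap_perms_def)
qed

lemma node_map_swap_perms:
  assumes "\<alpha> \<in> D k" "\<beta> \<in> D k" "lh \<alpha> = lh \<beta>"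
  shows "node_map (swap_perms \<alpha> \<beta>) \<alpha> = \<beta>"
proof (rule nth_equalityI)
  show "length (node_map (swap_perms \<alpha> \<beta>) \<alpha>) = length \<beta>" using assms by (simp add: length_D)
  fix i assume "i < length (node_map (swap_perms \<alpha> \<beta>) \<alpha>)"
  then have i: "i < length \<alpha>" "i \<le> k" using length_D[OF assms(1)] by auto
  then have "length (\<alpha> ! i) = lh \<alpha>" "length (\<beta> ! i) = lh \<alpha>" using assms by (auto simp: mem_D_iff)
  then show "node_map (swap_perms \<alpha> \<beta>) \<alpha> ! i = \<beta> ! i"
    using i by (intro nth_equalityI) (simp_all add: swap_perms_def)
qed

text \<open>The permutation of level \<open>a\<^sub>k\<close> that carries the lawless functional with bijections \<open>\<xi>\<close>
  to the one with bijections \<open>\<xi>'\<close>.\<close>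

definition conj_perms :: "nat \<Rightarrow> (nat \<Rightarrow> 'u \<Rightarrow> 'u) \<Rightarrow> (nat \<Rightarrow> 'u \<Rightarrow> 'u) \<Rightarrow> nat \<Rightarrow> nat \<Rightarrow> 'u \<Rightarrow> 'u" where
  "conj_perms k \<xi> \<xi>' i n v = (if i = k \<and> v \<in> A k then inv_into (A k) (\<xi> n) (\<xi>' n v) else v)"

lemma conj_perms_apply:
  assumes "\<xi> \<in> C (Suc k)" "\<xi>' \<in> C (Suc k)" "v \<in> A k"
  shows "conj_perms k \<xi> \<xi>' k n v \<in> A k" "\<xi> n (conj_perms k \<xi> \<xi>' k n v) = \<xi>' n v"
proof -
  have "bij_betw (\<xi> n) (A k) (A k)" "bij_betw (\<xi>' n) (A k) (A k)" using assms by (simp_all add: C_def)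
  then have "\<xi>' n v \<in> \<xi> n ` A k" using assms(3) by (auto simp: bij_betw_def)
  then show "conj_perms k \<xi> \<xi>' k n v \<in> A k" "\<xi> n (conj_perms k \<xi> \<xi>' k n v) = \<xi>' n v"
    using assms(3) by (simp_all add: conj_perms_def inv_into_into f_inv_into_f)
qed

lemma conj_perms_eqI:
  assumes "\<xi> \<in> C (Suc k)" "v \<in> A k" "w \<in> A k" "\<xi> n v = \<xi>' n w"
  shows "conj_perms k \<xi> \<xi>' k n w = v"
proof -
  have "inj_on (\<xi> n) (A k)" using assms(1) by (simp add: C_def bij_betw_def)
  then have "inv_into (A k) (\<xi> n) (\<xi> n v) = v" using assms(2) by (rule inv_into_f_f)
  then show ?thesis using assms(3) by (simp add: conj_perms_def flip: assms(4))
qed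

lemma level_perms_conj_perms:
  assumes "\<xi> \<in> C (Suc k)" "\<xi>' \<in> C (Suc k)"
  shows "level_perms (conj_perms k \<xi> \<xi>') (conj_perms k \<xi>' \<xi>)"
proof -
  have inverse: "conj_perms k \<zeta>' \<zeta> i n (conj_perms k \<zeta> \<zeta>' i n v) = v"
    if "\<zeta> \<in> C (Suc k)" "\<zeta>' \<in> C (Suc k)" for \<zeta> \<zeta>' i n v
  proof (cases "i = k \<and> v \<in> A k")
    case True
    then show ?thesis
      using conj_perms_apply[OF that, of v n] by (auto intro: conj_perms_eqI[OF that(2)])
  qed (auto simp: conj_perms_def)
  have "conj_perms k \<xi> \<xi>' i n v \<in> A i \<longleftrightarrow> v \<in> A i" for i n v
    using conj_perms_apply[OF assms] by (auto simp: conj_perms_def)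
  then show ?thesis using inverse assms by (simp add: level_perms_def)
qed

lemma node_map_conj_perms_fixed:
  assumes \<alpha>: "\<alpha> \<in> D j" and \<xi>: "\<xi> \<in> C (Suc k)"
    and agree: "\<And>n. n < lh \<alpha> \<Longrightarrow> \<xi> n (\<alpha> ! k ! n) = \<xi>' n (\<alpha> ! k ! n)"
  shows "node_map (conj_perms k \<xi> \<xi>') \<alpha> = \<alpha>"
proof (rule nth_equalityI)
  fix i assume "i < length (node_map (conj_perms k \<xi> \<xi>') \<alpha>)"
  then have i: "i < length \<alpha>" "i \<le> j" using length_D[OF \<alpha>] by simp_all
  then have len: "length (\<alpha> ! i) = lh \<alpha>" using \<alpha> by (simp add: mem_D_iff)
  have "conj_perms k \<xi> \<xi>' i n (\<alpha> ! i ! n) = \<alpha> ! i ! n" if n: "n < lh \<alpha>" for n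
  proof (cases "i = k")
    case True
    have "\<alpha> ! i ! n \<in> A i" using D_entry_in_A[OF \<alpha> i(2) n] .
    then show ?thesis using True conj_perms_eqI[OF \<xi>] agree[OF n] by simp
  qed (simp add: conj_perms_def)
  then show "node_map (conj_perms k \<xi> \<xi>') \<alpha> ! i = \<alpha> ! i"
    using i len by (intro nth_equalityI) simp_all
qed simp

end

locale beth_model = beth ne en
  for ne :: "nat \<Rightarrow> 'u" and en :: "('u list list \<times> nat \<Rightarrow> 'u option) \<Rightarrow> 'u" +
  fixes s :: nat
  assumes s_pos: "1 \<le> s"
    and inj_ne: "inj ne"
    and inj_on_en: "\<forall>k<s. inj_on en (PF k)"
begin

lemma ndec_ne [simp]: "ndec (ne n) = n"
  by (simp add: ndec_def inj_ne)

lemma dec_en: "k < s \<Longrightarrow> f \<in> PF k \<Longrightarrow> dec (Suc k) (en f) = f"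
  by (simp add: dec_def the_inv_into_f_f inj_on_en)

lemma
  assumes "k < s" "u \<in> A (Suc k)"
  shows dec_in_PF: "dec (Suc k) u \<in> PF k"
    and en_dec: "en (dec (Suc k) u) = u"
  using assms by (auto simp: A_Suc dec_en)

lemma dec_range: "k < s \<Longrightarrow> u \<in> A (Suc k) \<Longrightarrow> dec (Suc k) u (x, n) = Some v \<Longrightarrow> v \<in> A k"
  by (rule PF_range[OF dec_in_PF])

lemma lift_perm_in_A_inverse:
  assumes "level_perms \<theta> \<theta>'" "k \<le> s" "u \<in> A k"
  shows "lift_perm \<theta> k u \<in> A k \<and> lift_perm \<theta>' k (lift_perm \<theta> k u) = u"
  using assms(2,3)
proof (induction k arbitrary: u)
  case 0
  then show ?case by simp
next
  case (Suc k)
  then have k: "k < s" by simp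
  with Suc have IH: "\<And>v. v \<in> A k \<Longrightarrow> lift_perm \<theta> k v \<in> A k \<and> lift_perm \<theta>' k (lift_perm \<theta> k v) = v"
    by simp
  define f where "f = dec (Suc k) u"
  have f: "f \<in> PF k" "en f = u" using dec_in_PF en_dec k Suc.prems by (simp_all add: f_def)
  define F where "F = (\<lambda>(x, n). map_option (lift_perm \<theta> k) (f (node_map \<theta> x, n)))"
  have F: "F \<in> PF k" unfolding F_def using PF_comp_node_map[OF assms(1) _ f(1)] IH by blast
  have "(\<lambda>(x, n). map_option (lift_perm \<theta>' k) (F (node_map \<theta>' x, n))) = f"
  proof (intro ext, clarify)
    fix x n
    show "map_option (lift_perm \<theta>' k) (F (node_map \<theta>' x, n)) = f (x, n)"
      using IH PF_range[OF f(1), of x n]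
      by (cases "f (x, n)")
        (simp_all add: F_def node_map_inverse_perm[OF level_perms_sym[OF assms(1)]])
  qed
  then have "lift_perm \<theta>' (Suc k) (en F) = u" using f(2) by (simp add: dec_en[OF k F] lift_perm.simps)
  moreover have "lift_perm \<theta> (Suc k) u = en F" by (simp add: F_def f_def lift_perm.simps)
  ultimately show ?case using F by (simp add: A_Suc)
qed

lemma lift_perm_in_A: "level_perms \<theta> \<theta>' \<Longrightarrow> k \<le> s \<Longrightarrow> u \<in> A k \<Longrightarrow> lift_perm \<theta> k u \<in> A k"
  using lift_perm_in_A_inverse by blast

lemma lift_perm_inverse:
  "level_perms \<theta> \<theta>' \<Longrightarrow> k \<le> s \<Longrightarrow> u \<in> A k \<Longrightarrow> lift_perm \<theta>' k (lift_perm \<theta> k u) = u"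
  using lift_perm_in_A_inverse by blast

lemma bij_betw_lift_perm:
  assumes "level_perms \<theta> \<theta>'" "k \<le> s"
  shows "bij_betw (lift_perm \<theta> k) (A k) (A k)"
  using assms level_perms_sym[OF assms(1)]
  by (intro bij_betw_byWitness[where f' = "lift_perm \<theta>' k"])
    (auto simp: lift_perm_inverse lift_perm_in_A)

lemma dec_lift_perm:
  assumes "level_perms \<theta> \<theta>'" "k < s" "u \<in> A (Suc k)"
  shows "dec (Suc k) (lift_perm \<theta> (Suc k) u) =
    (\<lambda>(x, n). map_option (lift_perm \<theta> k) (dec (Suc k) u (node_map \<theta> x, n)))"
proof -
  have "(\<lambda>(x, n). map_option (lift_perm \<theta> k) (dec (Suc k) u (node_map \<theta> x, n))) \<in> PF k"
    using assms by (intro PF_comp_node_map dec_in_PF lift_perm_in_A) auto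
  then show ?thesis using assms(2) by (simp add: dec_en lift_perm.simps)
qed

lemma lift_perm_Suc_fixed:
  assumes perms: "level_perms \<theta> \<theta>'" and k: "k < s" and u: "u \<in> A (Suc k)"
    and fixed: "\<And>x n v. dec (Suc k) u (x, n) = Some v \<Longrightarrow> lift_perm \<theta> k v = v"
    and invariant: "\<And>x n. x \<in> D k \<Longrightarrow> dec (Suc k) u (node_map \<theta> x, n) = dec (Suc k) u (x, n)"
  shows "lift_perm \<theta> (Suc k) u = u"
proof -
  have "map_option (lift_perm \<theta> k) (dec (Suc k) u (node_map \<theta> x, n)) = dec (Suc k) u (x, n)" for x n
  proof (cases "x \<in> D k")
    case True
    then show ?thesis using invariant fixed by (cases "dec (Suc k) u (x, n)") auto
  next
    case False
    then have "dec (Suc k) u (node_map \<theta> x, n) = None" "dec (Suc k) u (x, n) = None"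
      using PF_domain[OF dec_in_PF[OF k u]] node_map_in_D_iff[OF perms] by blast+
    then show ?thesis by simp
  qed
  then show ?thesis using en_dec[OF k u] by (simp add: case_prod_beta' lift_perm.simps)
qed

lemma lift_perm_id_below:
  assumes perms: "level_perms \<theta> \<theta>'" and "k \<le> s" and id: "\<And>i n v. i < k \<Longrightarrow> \<theta> i n v = v"
    and "u \<in> A k"
  shows "lift_perm \<theta> k u = u"
  using assms(2,4) id
proof (induction k arbitrary: u)
  case (Suc k)
  have "node_map \<theta> x = x" if "x \<in> D k" for x
    using that Suc.prems(3) by (intro nth_equalityI) (auto simp: length_D map_pos_def map_nth)
  with Suc dec_range show ?case by (intro lift_perm_Suc_fixed[OF perms]) auto
qed simp

lemma Khat_in_A: "Khat k \<in> A k"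
  by (induction k) (simp_all add: A_0 A_Suc const_in_PF)

lemma lift_perm_Khat:
  assumes perms: "level_perms \<theta> \<theta>'"
  shows "k \<le> s \<Longrightarrow> lift_perm \<theta> k (Khat k) = Khat k"
proof (induction k)
  case (Suc k)
  then have k: "k < s" by simp
  have "dec (Suc k) (Khat (Suc k)) = (\<lambda>(x, n). if x \<in> D k then Some (Khat k) else None)"
    using dec_en[OF k const_in_PF[OF Khat_in_A]] by simp
  then show ?case
    using Suc k Khat_in_A[of "Suc k"]
    by (intro lift_perm_Suc_fixed[OF perms]) (auto simp: node_map_in_D_iff[OF perms] split: if_splits)
qed simp

lemma Sf_in_A: "k \<le> s \<Longrightarrow> u \<in> A k \<Longrightarrow> Sf k u \<in> A k"
proof (induction k arbitrary: u)
  case (Suc k)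
  then show ?case using PF_comp[OF _ dec_in_PF] by (simp add: A_Suc A_0)
qed (simp add: A_0)

lemma dec_Sf:
  assumes "k < s" "u \<in> A (Suc k)"
  shows "dec (Suc k) (Sf (Suc k) u) = (\<lambda>xn. map_option (Sf k) (dec (Suc k) u xn))"
  using assms PF_comp[OF Sf_in_A dec_in_PF] by (simp add: dec_en)

lemma lift_perm_Sf:
  assumes perms: "level_perms \<theta> \<theta>'"
  shows "k \<le> s \<Longrightarrow> u \<in> A k \<Longrightarrow> lift_perm \<theta> k (Sf k u) = Sf k (lift_perm \<theta> k u)"
proof (induction k arbitrary: u)
  case (Suc k)
  then have k: "k < s" by simp
  let ?lift = "lift_perm \<theta> k" and ?u = "dec (Suc k) u"
  have commute: "map_option ?lift (map_option (Sf k) (?u (x, n))) =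
      map_option (Sf k) (map_option ?lift (?u (x, n)))" for x n
    using Suc.IH k dec_range[OF k Suc.prems(2), of x n] by (cases "?u (x, n)") auto
  have "lift_perm \<theta> (Suc k) (Sf (Suc k) u) =
      en (\<lambda>(x, n). map_option ?lift (map_option (Sf k) (?u (node_map \<theta> x, n))))"
    using dec_Sf[OF k Suc.prems(2)] by (simp add: lift_perm.simps del: Sf.simps)
  also have "\<dots> = en (\<lambda>(x, n). map_option (Sf k) (map_option ?lift (?u (node_map \<theta> x, n))))"
    using commute by simp
  also have "\<dots> = Sf (Suc k) (lift_perm \<theta> (Suc k) u)"
    by (simp only: Sf.simps dec_lift_perm[OF perms k Suc.prems(2)] case_prod_beta')
  finally show ?case .
qed simp

lemma lift_perm_nu:
  assumes perms: "level_perms \<theta> \<theta>'" and k: "k < s" and \<xi>: "\<xi> \<in> C (Suc k)"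
  shows "lift_perm \<theta> (Suc k) (en (nu (Suc k) \<xi>)) =
    en (nu (Suc k) (\<lambda>n v. lift_perm \<theta> k (\<xi> n (\<theta> k n v))))"
proof -
  have "map_option (lift_perm \<theta> k) (nu (Suc k) \<xi> (node_map \<theta> x, n)) =
      nu (Suc k) (\<lambda>n v. lift_perm \<theta> k (\<xi> n (\<theta> k n v))) (x, n)" for x n
  proof (cases "x \<in> D k")
    case True
    then have "length x = Suc k" "length (x ! k) = lh x" by (simp_all add: mem_D_iff)
    then show ?thesis using True lh_node_map_D[OF True]
      by (auto simp: nu_Suc node_map_in_D_iff[OF perms])
  qed (simp add: nu_Suc node_map_in_D_iff[OF perms])
  then show ?thesis using dec_en[OF k nu_in_PF[OF \<xi>]] by (simp add: case_prod_beta' lift_perm.simps)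
qed

lemma lift_perm_L:
  assumes perms: "level_perms \<theta> \<theta>'" and k: "k < s" and u: "u \<in> L (Suc k)"
  shows "lift_perm \<theta> (Suc k) u \<in> L (Suc k)"
proof -
  obtain \<xi> where \<xi>: "\<xi> \<in> C (Suc k)" and u_def: "u = en (nu (Suc k) \<xi>)"
    using u by (auto simp: L_def)
  have "bij_betw (lift_perm \<theta> k \<circ> \<xi> n) (A k) (A k)" for n
    using \<xi> bij_betw_lift_perm[OF perms less_imp_le[OF k]] by (auto simp: C_def intro: bij_betw_trans)
  then have "bij_betw (lift_perm \<theta> k \<circ> \<xi> n \<circ> \<theta> k n) (A k) (A k)" for n
    by (rule bij_betw_trans[OF bij_betw_level_perm[OF perms]])
  then have "(\<lambda>n v. lift_perm \<theta> k (\<xi> n (\<theta> k n v))) \<in> C (Suc k)"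
    by (simp add: C_def comp_def)
  then show ?thesis by (auto simp: u_def lift_perm_nu[OF perms k \<xi>] L_def)
qed

lemma lift_perm_B:
  assumes perms: "level_perms \<theta> \<theta>'" and k: "k < s" and u: "u \<in> B (Suc k)"
  shows "lift_perm \<theta> (Suc k) u \<in> B (Suc k)"
proof -
  have uA: "u \<in> A (Suc k)" using u by (simp add: B_def)
  have "dec (Suc k) (lift_perm \<theta> (Suc k) u) (replicate (Suc k) [], n) =
      map_option (lift_perm \<theta> k) (dec (Suc k) u (replicate (Suc k) [], n))" for n
    by (simp only: dec_lift_perm[OF perms k uA] case_prod_conv node_map_replicate_Nil)
  then show ?thesis
    using u lift_perm_in_A[OF perms _ uA] k by (simp add: B_def del: replicate_Suc)
qed

text \<open>A lawlike functional has the same value at every node (monotonicity from the root), so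
  moving the nodes does not change it.\<close>

lemma lift_perm_B_fixed:
  assumes perms: "level_perms \<theta> \<theta>'" and k: "k < s" and u: "u \<in> B (Suc k)"
    and id: "\<And>i n v. i < k \<Longrightarrow> \<theta> i n v = v"
  shows "lift_perm \<theta> (Suc k) u = u"
proof (rule lift_perm_Suc_fixed[OF perms k])
  show uA: "u \<in> A (Suc k)" using u by (simp add: B_def)
  show "lift_perm \<theta> k v = v" if "dec (Suc k) u (x, n) = Some v" for x n v
    using lift_perm_id_below[OF perms _ id] dec_range[OF k uA that] k by simp
  fix x n
  assume x: "x \<in> D k"
  obtain w where w: "dec (Suc k) u (replicate (Suc k) [], n) = Some w"
    using u by (auto simp: B_def simp del: replicate_Suc)
  have "dec (Suc k) u (y, n) = Some w" if "y \<in> D k" for y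
    using PF_mono[OF dec_in_PF[OF k uA] root_in_D that nle_root[OF that] w] .
  then show "dec (Suc k) u (node_map \<theta> x, n) = dec (Suc k) u (x, n)"
    using x node_map_in_D_iff[OF perms] by simp
qed

lemma lift_perm_vdom:
  assumes "valid_var s v" "level_perms \<theta> \<theta>'" "c \<in> vdom v"
  shows "lift_perm \<theta> (vtype v) c \<in> vdom v"
proof (cases v)
  case (fields kd n i)
  then show ?thesis
    using assms lift_perm_in_A lift_perm_B lift_perm_L by (cases kd; cases n) (auto simp: Suc_le_eq)
qed

lemma bij_betw_lift_perm_vdom:
  assumes "valid_var s v" "level_perms \<theta> \<theta>'"
  shows "bij_betw (lift_perm \<theta> (vtype v)) (vdom v) (vdom v)"
  using assms level_perms_sym[OF assms(2)] lift_perm_vdom vdom_subset_A[OF assms(1)]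
    lift_perm_inverse valid_var_vtype_le[OF assms(1)]
  by (intro bij_betw_byWitness[where f' = "lift_perm \<theta>' (vtype v)"]) blast+

section \<open>Invariance of forcing\<close>

lemma ev_in_A: "ty s t = Some k \<Longrightarrow> (\<forall>v\<in>fvt t. \<rho> v \<in> vdom v) \<Longrightarrow> set_option (ev \<alpha> \<rho> t) \<subseteq> A k"
proof (induction t arbitrary: k)
  case (TVar v)
  then have "valid_var s v" "k = vtype v" "\<rho> v \<in> vdom v" by (simp_all split: if_splits)
  then have "\<rho> v \<in> A k" using vdom_subset_A[of s v] by blast
  then show ?case by simp
next
  case (TAp n z t)
  then have z: "ty s z = Some n" and t: "ty s t = Some 0" and "1 \<le> n" "k = n - 1"
    by (auto split: if_splits)
  then obtain n' where n: "n = Suc n'" "k = n'" "n' < s"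
    using ty_le[OF z] by (cases n) auto
  then show ?case
    using TAp.IH(1)[OF z] TAp.prems dec_range[OF n(3)] by (auto split: option.splits)
qed (auto simp: A_0 Khat_in_A Sf_in_A dest: ty_le split: if_splits option.splits)

lemma ev_lift_perm:
  assumes perms: "level_perms \<theta> \<theta>'"
  shows "ty s t = Some k \<Longrightarrow> (\<forall>v\<in>fvt t. \<rho> v \<in> vdom v) \<Longrightarrow>
    ev (node_map \<theta>' \<alpha>) (lift_env \<theta> \<rho>) t = map_option (lift_perm \<theta> k) (ev \<alpha> \<rho> t)"
proof (induction t arbitrary: k)
  case (TK n)
  then show ?case using lift_perm_Khat[OF perms] by (auto split: if_splits)
next
  case (TN n z)
  then have z: "ty s z = Some n" and k: "k = n" "n \<le> s" by (auto dest: ty_le split: if_splits)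
  then show ?case
    using TN.IH[OF z] TN.prems ev_in_A[OF z, of \<rho> \<alpha>] lift_perm_Sf[OF perms]
    by (cases "ev \<alpha> \<rho> z") auto
next
  case (TAp n z t)
  then have z: "ty s z = Some n" and t: "ty s t = Some 0" and "1 \<le> n" "k = n - 1"
    by (auto split: if_splits)
  then obtain n' where n: "n = Suc n'" "k = n'" "n' < s"
    using ty_le[OF z] by (cases n) auto
  have "node_map \<theta> (take n (node_map \<theta>' \<alpha>)) = take n \<alpha>"
    by (simp add: take_node_map node_map_inverse_perm[OF level_perms_sym[OF perms]])
  then show ?case
    using TAp.IH(1)[OF z] TAp.IH(2)[OF t] TAp.prems ev_in_A[OF z, of \<rho> \<alpha>]
    by (auto simp: n dec_lift_perm[OF perms] split: option.splits)
qed (auto simp: option.map_id lift_env_def split: if_splits option.splits)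

lemma forces_Eq_lift_perm:
  assumes perms: "level_perms \<theta> \<theta>'" and x: "ty s x = Some k" and y: "ty s y = Some k"
    and \<rho>: "\<forall>v\<in>fvt x \<union> fvt y. \<rho> v \<in> vdom v" and \<alpha>: "\<alpha> \<in> D (s - 1)"
  shows "forces s (Eq k x y) \<rho> \<alpha> \<longleftrightarrow> forces s (Eq k x y) (lift_env \<theta> \<rho>) (node_map \<theta>' \<alpha>)"
proof -
  have inj: "inj_on (lift_perm \<theta> k) (A k)"
    using bij_betw_lift_perm[OF perms ty_le[OF x]] by (rule bij_betw_imp_inj_on)
  have "(ev \<beta> \<rho> x \<noteq> None \<and> ev \<beta> \<rho> x = ev \<beta> \<rho> y) \<longleftrightarrow>
      (ev (node_map \<theta>' \<beta>) (lift_env \<theta> \<rho>) x \<noteq> None \<and>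
       ev (node_map \<theta>' \<beta>) (lift_env \<theta> \<rho>) x = ev (node_map \<theta>' \<beta>) (lift_env \<theta> \<rho>) y)" for \<beta>
    using \<rho> ev_lift_perm[OF perms x, of \<rho> \<beta>] ev_lift_perm[OF perms y, of \<rho> \<beta>]
      map_option_inj_on_eq_iff[OF ev_in_A[OF x, of \<rho> \<beta>] ev_in_A[OF y, of \<rho> \<beta>] inj]
    by simp
  then show ?thesis by (simp add: all_paths_node_map_iff[OF perms])
qed

lemma forces_Prov_lift_perm:
  assumes perms: "level_perms \<theta> \<theta>'" and z: "ty s z = Some 0" and \<rho>: "\<forall>v\<in>fvt z. \<rho> v \<in> vdom v"
    and \<phi>: "\<And>\<gamma>. \<gamma> \<in> D (s - 1) \<Longrightarrow> forces s \<phi> \<rho> \<gamma> \<longleftrightarrow> forces s \<phi> (lift_env \<theta> \<rho>) (node_map \<theta>' \<gamma>)"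
    and \<alpha>: "\<alpha> \<in> D (s - 1)"
  shows "forces s (Prov z \<phi>) \<rho> \<alpha> \<longleftrightarrow> forces s (Prov z \<phi>) (lift_env \<theta> \<rho>) (node_map \<theta>' \<alpha>)"
proof -
  have "(\<exists>\<gamma>\<in>D (s - 1). nle \<beta> \<gamma> \<and> lh \<gamma> = m \<and> forces s \<phi> \<rho> \<gamma>) \<longleftrightarrow>
      (\<exists>\<gamma>\<in>D (s - 1). nle (node_map \<theta>' \<beta>) \<gamma> \<and> lh \<gamma> = m \<and> forces s \<phi> (lift_env \<theta> \<rho>) \<gamma>)" for \<beta> m
    using \<phi> lh_node_map_D nle_node_map_iff[OF level_perms_sym[OF perms]]
    by (intro ex_D_node_map_iff[OF perms]) auto
  moreover have "ev (node_map \<theta>' \<beta>) (lift_env \<theta> \<rho>) z = ev \<beta> \<rho> z" for \<beta>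
    using ev_lift_perm[OF perms z \<rho>] by (simp add: option.map_id)
  ultimately show ?thesis by (simp add: all_paths_node_map_iff[OF perms])
qed

lemma forces_lift_perm:
  assumes perms: "level_perms \<theta> \<theta>'"
  shows "wf s b \<phi> \<Longrightarrow> \<alpha> \<in> D (s - 1) \<Longrightarrow> (\<forall>v\<in>fv \<phi>. \<rho> v \<in> vdom v) \<Longrightarrow>
    forces s \<phi> \<rho> \<alpha> \<longleftrightarrow> forces s \<phi> (lift_env \<theta> \<rho>) (node_map \<theta>' \<alpha>)"
proof (induction \<phi> arbitrary: b \<rho> \<alpha>)
  case Bot
  then show ?case by simp
next
  case (Eq k x y)
  then show ?case by (intro forces_Eq_lift_perm[OF perms]) auto
next
  case (Prov z \<phi>)
  then show ?case by (intro forces_Prov_lift_perm[OF perms]) auto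
next
  case (Conj \<phi> \<psi>)
  then show ?case by auto
next
  case (Disj \<phi> \<psi>)
  then have "forces s \<phi> \<rho> \<beta> \<or> forces s \<psi> \<rho> \<beta> \<longleftrightarrow>
      forces s \<phi> (lift_env \<theta> \<rho>) (node_map \<theta>' \<beta>) \<or> forces s \<psi> (lift_env \<theta> \<rho>) (node_map \<theta>' \<beta>)"
    if "\<beta> \<in> D (s - 1)" for \<beta>
    using that by auto
  then show ?case by (simp add: all_paths_node_map_iff[OF perms])
next
  case (Imp \<phi> \<psi>)
  then have "(nle \<beta> \<alpha> \<longrightarrow> forces s \<phi> \<rho> \<beta> \<longrightarrow> forces s \<psi> \<rho> \<beta>) \<longleftrightarrow>
      (nle (node_map \<theta>' \<beta>) (node_map \<theta>' \<alpha>) \<longrightarrow> forces s \<phi> (lift_env \<theta> \<rho>) (node_map \<theta>' \<beta>) \<longrightarrow>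
        forces s \<psi> (lift_env \<theta> \<rho>) (node_map \<theta>' \<beta>))"
    if "\<beta> \<in> D (s - 1)" for \<beta>
    using that nle_node_map_iff[OF level_perms_sym[OF perms]] by auto
  then show ?case by (simp add: all_D_node_map_iff[OF perms])
next
  case (All v \<phi>)
  then have v: "valid_var s v" and \<phi>: "wf s b \<phi>" by auto
  have "forces s \<phi> (\<rho>(v := c)) \<alpha> \<longleftrightarrow>
      forces s \<phi> ((lift_env \<theta> \<rho>)(v := lift_perm \<theta> (vtype v) c)) (node_map \<theta>' \<alpha>)"
    if "c \<in> vdom v" for c
  proof -
    have "\<forall>w\<in>fv \<phi>. (\<rho>(v := c)) w \<in> vdom w" using All.prems(3) that by auto
    then show ?thesis by (simp only: All.IH[OF \<phi> All.prems(2)] lift_env_upd)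
  qed
  then show ?case
    using bij_betw_ball[OF bij_betw_lift_perm_vdom[OF v perms],
        where phi = "\<lambda>c. forces s \<phi> ((lift_env \<theta> \<rho>)(v := c)) (node_map \<theta>' \<alpha>)"]
    by simp
next
  case (Ex v \<phi>)
  then have v: "valid_var s v" and \<phi>: "wf s b \<phi>" by auto
  have "(\<exists>c\<in>vdom v. forces s \<phi> (\<rho>(v := c)) \<beta>) \<longleftrightarrow>
      (\<exists>c\<in>vdom v. forces s \<phi> ((lift_env \<theta> \<rho>)(v := c)) (node_map \<theta>' \<beta>))"
    if "\<beta> \<in> D (s - 1)" for \<beta>
  proof -
    have "forces s \<phi> (\<rho>(v := c)) \<beta> \<longleftrightarrow>
        forces s \<phi> ((lift_env \<theta> \<rho>)(v := lift_perm \<theta> (vtype v) c)) (node_map \<theta>' \<beta>)"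
      if "c \<in> vdom v" for c
    proof -
      have "\<forall>w\<in>fv \<phi>. (\<rho>(v := c)) w \<in> vdom w" using Ex.prems(3) that by auto
      then show ?thesis by (simp only: Ex.IH[OF \<phi> \<open>\<beta> \<in> D (s - 1)\<close>] lift_env_upd)
    qed
    then show ?thesis
      using bij_betw_ball[OF bij_betw_lift_perm_vdom[OF v perms],
          where phi = "\<lambda>c. \<not> forces s \<phi> ((lift_env \<theta> \<rho>)(v := c)) (node_map \<theta>' \<beta>)"]
      by auto
  qed
  then show ?case unfolding forces.simps by (rule all_paths_node_map_iff[OF perms])
qed

section \<open>Locality of forcing\<close>

theorem forces_iff_nodes_agree_below_sort:
  assumes m: "1 \<le> m" and \<phi>: "wf s True \<phi>" "sort \<phi> \<le> m" and \<rho>: "\<forall>v\<in>fv \<phi>. \<rho> v \<in> vdom v"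
    and \<alpha>: "\<alpha> \<in> D (s - 1)" and \<beta>: "\<beta> \<in> D (s - 1)" and agree: "\<forall>i<m. i < s \<longrightarrow> \<alpha> ! i = \<beta> ! i"
  shows "forces s \<phi> \<rho> \<alpha> \<longleftrightarrow> forces s \<phi> \<rho> \<beta>"
proof -
  let ?\<theta> = "swap_perms \<alpha> \<beta>"
  have "lh \<alpha> = lh \<beta>" using agree m s_pos by (simp add: lh_def)
  note perms = level_perms_swap_perms[OF \<alpha> \<beta> this] and swap = node_map_swap_perms[OF \<alpha> \<beta> this]
  have "lift_env ?\<theta> \<rho> v = \<rho> v" if v: "v \<in> fv \<phi>" for v
  proof -
    have "?\<theta> i n w = w" if "i < vtype v" for i n w
      using that vtype_le_sort[OF v] \<phi>(2) agree length_D[OF \<alpha>] s_pos by (simp add: swap_perms_def)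
    moreover have "valid_var s v" using fv_valid_var[OF \<phi>(1) v] .
    moreover have "\<rho> v \<in> A (vtype v)" using vdom_subset_A[OF \<open>valid_var s v\<close>] \<rho> v by blast
    ultimately show ?thesis
      using lift_perm_id_below[OF perms valid_var_vtype_le] by (simp add: lift_env_def)
  qed
  then show ?thesis
    using forces_lift_perm[OF perms \<phi>(1) \<alpha> \<rho>] forces_cong[of \<phi> "lift_env ?\<theta> \<rho>" \<rho>] swap by simp
qed

lemma lift_perm_conj_perms:
  assumes k: "k < s" and \<xi>: "\<xi> \<in> C (Suc k)" "\<xi>' \<in> C (Suc k)"
  shows "lift_perm (conj_perms k \<xi> \<xi>') (Suc k) (en (nu (Suc k) \<xi>)) = en (nu (Suc k) \<xi>')"
proof -
  let ?\<theta> = "conj_perms k \<xi> \<xi>'"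
  have "lift_perm ?\<theta> k (\<xi> n (?\<theta> k n v)) = \<xi>' n v" if "v \<in> A k" for n v
  proof -
    have "\<xi>' n v \<in> A k" using \<xi>(2) that by (auto simp: C_def dest: bij_betwE)
    then have "lift_perm ?\<theta> k (\<xi>' n v) = \<xi>' n v"
      using k by (intro lift_perm_id_below[OF level_perms_conj_perms[OF \<xi>]]) (auto simp: conj_perms_def)
    then show ?thesis using conj_perms_apply(2)[OF \<xi> that] by simp
  qed
  then show ?thesis by (simp add: lift_perm_nu[OF level_perms_conj_perms[OF \<xi>] k \<xi>(1)] cong: nu_cong)
qed

lemma lift_perm_conj_perms_fixed:
  assumes k: "k < s" and \<xi>: "\<xi> \<in> C (Suc k)" "\<xi>' \<in> C (Suc k)"
    and v: "valid_var s v" and c: "c \<in> vdom v"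
    and low: "vtype v \<le> k \<or> vtype v = Suc k \<and> vkind_of v = VLaw"
  shows "lift_perm (conj_perms k \<xi> \<xi>') (vtype v) c = c"
  using low
proof
  assume "vtype v \<le> k"
  moreover have "c \<in> A (vtype v)" using vdom_subset_A[OF v] c by blast
  ultimately show ?thesis
    using k by (simp add: lift_perm_id_below[OF level_perms_conj_perms[OF \<xi>]] conj_perms_def)
next
  assume "vtype v = Suc k \<and> vkind_of v = VLaw"
  then obtain i where "v = (VLaw, Suc k, i)" by (cases v) auto
  then show ?thesis
    using c k by (simp add: lift_perm_B_fixed[OF level_perms_conj_perms[OF \<xi>]] conj_perms_def)
qed

lemma lawless_agree_on_entries:
  assumes k: "k < s" "k \<le> j" and \<alpha>: "\<alpha> \<in> D j" and \<xi>: "\<xi> \<in> C (Suc k)" "\<xi>' \<in> C (Suc k)"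
    and n: "n < lh \<alpha>"
    and agree: "dec (Suc k) (en (nu (Suc k) \<xi>)) (take (Suc k) \<alpha>, n) =
      dec (Suc k) (en (nu (Suc k) \<xi>')) (take (Suc k) \<alpha>, n)"
  shows "\<xi> n (\<alpha> ! k ! n) = \<xi>' n (\<alpha> ! k ! n)"
  using agree take_in_D[OF \<alpha> k(2)] n by (simp add: dec_en[OF k(1) nu_in_PF] \<xi> nu_Suc)

theorem forces_iff_lawless_agree_on_node:
  assumes p: "1 \<le> p" "p \<le> s" and H: "vkind_of H = VLawless" "vtype H = p"
    and \<phi>: "wf s True \<phi>" "sort \<phi> \<le> p"
    and only_H: "\<forall>v\<in>fv \<phi>. vtype v = p \<and> vkind_of v \<in> {VGen, VLawless} \<longrightarrow> v = H"
    and \<rho>: "\<forall>v\<in>fv \<phi> - {H}. \<rho> v \<in> vdom v" and \<alpha>: "\<alpha> \<in> D (s - 1)"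
    and g: "g \<in> L p" and h: "h \<in> L p"
    and agree: "\<forall>n<lh \<alpha>. dec p g (take p \<alpha>, n) = dec p h (take p \<alpha>, n)"
  shows "forces s \<phi> (\<rho>(H := g)) \<alpha> \<longleftrightarrow> forces s \<phi> (\<rho>(H := h)) \<alpha>"
proof -
  obtain k where p_Suc: "p = Suc k" and k: "k < s" "k \<le> s - 1" using p by (cases p) auto
  obtain \<xi> \<xi>' where \<xi>: "\<xi> \<in> C (Suc k)" "\<xi>' \<in> C (Suc k)"
    and g_def: "g = en (nu (Suc k) \<xi>)" and h_def: "h = en (nu (Suc k) \<xi>')"
    using g h by (auto simp: L_def p_Suc)
  let ?\<theta> = "conj_perms k \<xi> \<xi>'"
  note perms = level_perms_conj_perms[OF \<xi>]
  have "\<xi>' n (\<alpha> ! k ! n) = \<xi> n (\<alpha> ! k ! n)" if "n < lh \<alpha>" for n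
    using lawless_agree_on_entries[OF k(1,2) \<alpha> \<xi> that] agree that by (simp add: p_Suc g_def h_def)
  then have fixed_node: "node_map (conj_perms k \<xi>' \<xi>) \<alpha> = \<alpha>"
    by (rule node_map_conj_perms_fixed[OF \<alpha> \<xi>(2)])
  have lifted: "lift_env ?\<theta> (\<rho>(H := g)) v = (\<rho>(H := h)) v" if v: "v \<in> fv \<phi>" for v
  proof (cases "v = H")
    case True
    then show ?thesis using lift_perm_conj_perms[OF k(1) \<xi>] H by (simp add: lift_env_def g_def h_def p_Suc)
  next
    case False
    have valid: "valid_var s v" using fv_valid_var[OF \<phi>(1) v] .
    have "vtype v \<le> Suc k" using vtype_le_sort[OF v] \<phi>(2) p_Suc by simp
    moreover have "vkind_of v = VLaw" if vt: "vtype v = Suc k"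
    proof -
      obtain kd i where "v = (kd, Suc k, i)" using vt by (cases v) auto
      then show ?thesis using only_H v False valid p_Suc by (cases kd) auto
    qed
    ultimately have "vtype v \<le> k \<or> vtype v = Suc k \<and> vkind_of v = VLaw" by linarith
    moreover have "\<rho> v \<in> vdom v" using \<rho> v False by blast
    ultimately show ?thesis
      using lift_perm_conj_perms_fixed[OF k(1) \<xi> valid] False by (simp add: lift_env_def)
  qed
  have "\<forall>v\<in>fv \<phi>. (\<rho>(H := g)) v \<in> vdom v"
    using \<rho> g H by (cases H) auto
  then have "forces s \<phi> (\<rho>(H := g)) \<alpha> \<longleftrightarrow> forces s \<phi> (lift_env ?\<theta> (\<rho>(H := g))) \<alpha>"
    using forces_lift_perm[OF perms \<phi>(1) \<alpha>] fixed_node by simp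
  also have "\<dots> \<longleftrightarrow> forces s \<phi> (\<rho>(H := h)) \<alpha>"
    by (rule forces_cong) (rule lifted)
  finally show ?thesis .
qed

end

theorem lemma7p3:
  fixes s :: nat
    and ne :: "nat \<Rightarrow> 'u"
    and en :: "('u list list \<times> nat \<Rightarrow> 'u option) \<Rightarrow> 'u"
  assumes "1 \<le> s"
    and "inj ne"
    and "\<forall>k<s. inj_on en (beth.PF ne en k)"
  shows
   "(\<forall>m \<phi> \<rho> \<alpha> \<beta>.
       1 \<le> m \<and> wf s True \<phi> \<and> sort \<phi> \<le> m \<and>
       (\<forall>v\<in>fv \<phi>. \<rho> v \<in> beth.vdom ne en v) \<and>
       \<alpha> \<in> beth.D ne en (s - 1) \<and> \<beta> \<in> beth.D ne en (s - 1) \<and>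
       (\<forall>i<m. i < s \<longrightarrow> \<alpha> ! i = \<beta> ! i)
     \<longrightarrow> (beth.forces ne en s \<phi> \<rho> \<alpha> \<longleftrightarrow> beth.forces ne en s \<phi> \<rho> \<beta>))
  \<and> (\<forall>p H \<phi> \<rho> \<alpha> g h.
       1 \<le> p \<and> p \<le> s \<and> vkind_of H = VLawless \<and> vtype H = p \<and>
       wf s True \<phi> \<and> sort \<phi> \<le> p \<and>
       (\<forall>v\<in>fv \<phi>. vtype v = p \<and> vkind_of v \<in> {VGen, VLawless} \<longrightarrow> v = H) \<and>
       (\<forall>v\<in>fv \<phi> - {H}. \<rho> v \<in> beth.vdom ne en v) \<and>
       \<alpha> \<in> beth.D ne en (s - 1) \<and>
       g \<in> beth.L ne en p \<and> h \<in> beth.L ne en p \<and>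
       (\<forall>n<lh \<alpha>. beth.dec ne en p g (take p \<alpha>, n) = beth.dec ne en p h (take p \<alpha>, n))
     \<longrightarrow> (beth.forces ne en s \<phi> (\<rho>(H := g)) \<alpha> \<longleftrightarrow> beth.forces ne en s \<phi> (\<rho>(H := h)) \<alpha>))"
proof -
  interpret beth_model ne en s
    using assms by unfold_locales auto
  show ?thesis
    using forces_iff_nodes_agree_below_sort forces_iff_lawless_agree_on_node by blast
qed

end
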